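(* In an operational probabilistic theory with finite-dimensional transformation spaces and convex, closed sets of transformations, if $\chi$ is the unique invariant state of system $\mathrm{A}$, then $\chi$ is internal: for every $\omega\in\mathsf{St}_1(\mathrm{A})$ there exist $p\in(0,1]$ and $\omega_C\in\mathsf{St}_1(\mathrm{A})$ with $\chi=p\,\omega+(1-p)\,\omega_C$.
   Context: $\mathsf{St}_1(\mathrm{A})$ is the set of deterministic (normalized) states of $\mathrm{A}$; $\mathsf{G}_{\mathrm{A}}$ is the group of reversible transformations of $\mathrm{A}$ (a compact group under the standing assumptions). A state $\chi\in\mathsf{St}_1(\mathrm{A})$ is invariant if $\mathcal{U}\chi=\chi$ for all $\mathcal{U}\in\mathsf{G}_{\mathrm{A}}$. *)

theory Defs
  imports "HOL-Analysis.Analysis"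
begin

text \<open>The deterministic states St1 form a subset of a finite-dimensional real vector
  space 'v; the reversible transformations form a set G of linear maps on 'v.\<close>

definition reversible_group :: "('v::euclidean_space \<Rightarrow>\<^sub>L 'v) set \<Rightarrow> 'v set \<Rightarrow> bool" where
  "reversible_group G St1 \<longleftrightarrow>
     id_blinfun \<in> G \<and>
     (\<forall>U\<in>G. \<forall>V\<in>G. U o\<^sub>L V \<in> G) \<and>
     (\<forall>U\<in>G. \<exists>V\<in>G. V o\<^sub>L U = id_blinfun \<and> U o\<^sub>L V = id_blinfun) \<and>
     (\<forall>U\<in>G. blinfun_apply U ` St1 = St1) \<and>
     compact G"

definition invariant_state :: "('v::euclidean_space \<Rightarrow>\<^sub>L 'v) set \<Rightarrow> 'v set \<Rightarrow> 'v \<Rightarrow> bool" where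
  "invariant_state G St1 chi \<longleftrightarrow> chi \<in> St1 \<and> (\<forall>U\<in>G. blinfun_apply U chi = chi)"

definition internal_state :: "'v::real_vector set \<Rightarrow> 'v \<Rightarrow> bool" where
  "internal_state St1 chi \<longleftrightarrow>
     (\<forall>\<omega>\<in>St1. \<exists>p \<omega>C. 0 < p \<and> p \<le> 1 \<and> \<omega>C \<in> St1 \<and> chi = p *\<^sub>R \<omega> + (1 - p) *\<^sub>R \<omega>C)"

end

theory Submission
  imports Defs
begin

text \<open>A compact group \<open>G\<close> of linear maps fixes a point of every nonempty compact convex
  \<open>G\<close>-stable set \<open>K\<close>: the function \<open>x \<mapsto> max {\<parallel>U x\<parallel>\<^sup>2 | U \<in> G}\<close> is continuous, strictly convex and
  does not increase along \<open>G\<close>, so if a minimiser \<open>x\<close> on \<open>K\<close> were moved by some \<open>V \<in> G\<close>, the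
  midpoint of \<open>x\<close> and \<open>V x\<close> would take a smaller value. Taking for \<open>K\<close> the convex hull of the
  orbit of a state in the relative interior of the state space yields an invariant state in
  the relative interior; by uniqueness it is \<open>\<chi>\<close>. Finally a point of the relative interior is
  internal, because the segment from any state \<open>\<omega>\<close> through \<open>\<chi>\<close> can be prolonged beyond \<open>\<chi>\<close>
  inside the state space.\<close>

definition orbit_sqnorm :: "('a::real_normed_vector \<Rightarrow>\<^sub>L 'a) set \<Rightarrow> 'a \<Rightarrow> real" where
  "orbit_sqnorm G x = Sup ((\<lambda>U. (norm (blinfun_apply U x))\<^sup>2) ` G)"

lemma compact_sqnorm_orbit:
  fixes G :: "('a::real_normed_vector \<Rightarrow>\<^sub>L 'a) set"
  assumes "compact G"
  shows "compact ((\<lambda>U. (norm (blinfun_apply U x))\<^sup>2) ` G)"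
  by (rule compact_continuous_image[OF _ assms]) (intro continuous_intros)

lemma orbit_sqnorm_upper:
  fixes G :: "('a::real_normed_vector \<Rightarrow>\<^sub>L 'a) set"
  assumes "compact G" "U \<in> G"
  shows "(norm (U x))\<^sup>2 \<le> orbit_sqnorm G x"
  unfolding orbit_sqnorm_def using assms compact_sqnorm_orbit[OF assms(1), of x]
  by (intro cSup_upper) (auto intro: bounded_imp_bdd_above compact_imp_bounded)

lemma orbit_sqnorm_attained:
  fixes G :: "('a::real_normed_vector \<Rightarrow>\<^sub>L 'a) set"
  assumes "compact G" "G \<noteq> {}"
  obtains U where "U \<in> G" "orbit_sqnorm G x = (norm (U x))\<^sup>2"
proof -
  have "orbit_sqnorm G x \<in> (\<lambda>U. (norm (blinfun_apply U x))\<^sup>2) ` G"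
    unfolding orbit_sqnorm_def using assms compact_sqnorm_orbit[OF assms(1), of x]
    by (intro closed_contains_Sup)
      (auto intro: bounded_imp_bdd_above compact_imp_bounded compact_imp_closed)
  then show ?thesis using that by blast
qed

lemma norm_sq_convex_combination:
  fixes a b :: "'a::real_normed_vector"
  assumes "0 \<le> t" "t \<le> 1"
  shows "(norm ((1 - t) *\<^sub>R a + t *\<^sub>R b))\<^sup>2 \<le> (1 - t) * (norm a)\<^sup>2 + t * (norm b)\<^sup>2"
proof -
  have "norm ((1 - t) *\<^sub>R a + t *\<^sub>R b) \<le> (1 - t) * norm a + t * norm b"
    using norm_triangle_ineq[of "(1 - t) *\<^sub>R a" "t *\<^sub>R b"] assms by simp
  then have "(norm ((1 - t) *\<^sub>R a + t *\<^sub>R b))\<^sup>2 \<le> ((1 - t) * norm a + t * norm b)\<^sup>2"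
    by (simp add: power_mono)
  also have "\<dots> \<le> (1 - t) * (norm a)\<^sup>2 + t * (norm b)\<^sup>2"
    using convex_onD[OF convex_power2, of t "norm a" "norm b"] assms by simp
  finally show ?thesis .
qed

lemma norm_sq_midpoint_less:
  fixes a b :: "'a::real_inner"
  assumes "a \<noteq> b"
  shows "(norm (midpoint a b))\<^sup>2 < ((norm a)\<^sup>2 + (norm b)\<^sup>2) / 2"
proof -
  have "(norm (midpoint a b))\<^sup>2 = (norm (a + b))\<^sup>2 / 4"
    by (simp add: midpoint_def power2_eq_square)
  moreover have "(norm (a + b))\<^sup>2 + (norm (a - b))\<^sup>2 = 2 * (norm a)\<^sup>2 + 2 * (norm b)\<^sup>2"
    by (simp add: power2_norm_eq_inner inner_add_left inner_add_right inner_diff_left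
        inner_diff_right inner_commute)
  moreover have "(norm (a - b))\<^sup>2 > 0" using assms by simp
  ultimately show ?thesis by argo
qed

lemma convex_on_orbit_sqnorm:
  fixes G :: "('a::real_normed_vector \<Rightarrow>\<^sub>L 'a) set"
  assumes "compact G" "G \<noteq> {}"
  shows "convex_on UNIV (orbit_sqnorm G)"
proof (rule convex_onI[OF _ convex_UNIV])
  fix t :: real and x y
  assume t: "0 < t" "t < 1"
  obtain U where U: "U \<in> G"
    and max: "orbit_sqnorm G ((1 - t) *\<^sub>R x + t *\<^sub>R y) = (norm (U ((1 - t) *\<^sub>R x + t *\<^sub>R y)))\<^sup>2"
    using orbit_sqnorm_attained[OF assms] by metis
  note max
  also have "\<dots> = (norm ((1 - t) *\<^sub>R U x + t *\<^sub>R U y))\<^sup>2"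
    by (simp add: blinfun.add_right blinfun.scaleR_right)
  also have "\<dots> \<le> (1 - t) * (norm (U x))\<^sup>2 + t * (norm (U y))\<^sup>2"
    using t by (intro norm_sq_convex_combination) auto
  also have "\<dots> \<le> (1 - t) * orbit_sqnorm G x + t * orbit_sqnorm G y"
    using t orbit_sqnorm_upper[OF assms(1) U(1)] by (intro add_mono mult_left_mono) auto
  finally show "orbit_sqnorm G ((1 - t) *\<^sub>R x + t *\<^sub>R y)
      \<le> (1 - t) * orbit_sqnorm G x + t * orbit_sqnorm G y" .
qed

lemma continuous_on_orbit_sqnorm:
  fixes G :: "('a::euclidean_space \<Rightarrow>\<^sub>L 'a) set"
  assumes "compact G" "G \<noteq> {}"
  shows "continuous_on UNIV (orbit_sqnorm G)"
  by (rule convex_on_continuous[OF open_UNIV convex_on_orbit_sqnorm[OF assms]])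

lemma orbit_sqnorm_apply_le:
  fixes G :: "('a::real_normed_vector \<Rightarrow>\<^sub>L 'a) set"
  assumes "compact G" "\<And>U V. U \<in> G \<Longrightarrow> V \<in> G \<Longrightarrow> U o\<^sub>L V \<in> G" "V \<in> G"
  shows "orbit_sqnorm G (V x) \<le> orbit_sqnorm G x"
proof -
  obtain U where "U \<in> G" "orbit_sqnorm G (V x) = (norm (U (V x)))\<^sup>2"
    using orbit_sqnorm_attained[OF assms(1)] assms(3) by blast
  moreover have "(norm ((U o\<^sub>L V) x))\<^sup>2 \<le> orbit_sqnorm G x"
    using assms \<open>U \<in> G\<close> by (intro orbit_sqnorm_upper) auto
  ultimately show ?thesis by simp
qed

lemma orbit_sqnorm_midpoint_less:
  fixes G :: "('a::real_inner \<Rightarrow>\<^sub>L 'a) set"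
  assumes "compact G" "G \<noteq> {}" "\<And>U. U \<in> G \<Longrightarrow> inj U" "x \<noteq> y"
  shows "orbit_sqnorm G (midpoint x y) < (orbit_sqnorm G x + orbit_sqnorm G y) / 2"
proof -
  obtain U where U: "U \<in> G" and max: "orbit_sqnorm G (midpoint x y) = (norm (U (midpoint x y)))\<^sup>2"
    using orbit_sqnorm_attained[OF assms(1,2)] by metis
  note max
  also have "\<dots> = (norm (midpoint (U x) (U y)))\<^sup>2"
    by (simp add: midpoint_def blinfun.add_right blinfun.scaleR_right)
  also have "\<dots> < ((norm (U x))\<^sup>2 + (norm (U y))\<^sup>2) / 2"
    using assms(3)[OF U(1)] assms(4) by (intro norm_sq_midpoint_less) (auto dest: injD)
  also have "\<dots> \<le> (orbit_sqnorm G x + orbit_sqnorm G y) / 2"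
    using orbit_sqnorm_upper[OF assms(1) U(1)] by (intro divide_right_mono add_mono) auto
  finally show ?thesis .
qed

theorem compact_semigroup_common_fixed_point:
  fixes G :: "('a::euclidean_space \<Rightarrow>\<^sub>L 'a) set"
  assumes "compact G" "G \<noteq> {}"
    and "\<And>U V. U \<in> G \<Longrightarrow> V \<in> G \<Longrightarrow> U o\<^sub>L V \<in> G"
    and "\<And>U. U \<in> G \<Longrightarrow> inj U"
    and "compact K" "convex K" "K \<noteq> {}" "\<And>U. U \<in> G \<Longrightarrow> U ` K \<subseteq> K"
  obtains x where "x \<in> K" "\<And>U. U \<in> G \<Longrightarrow> U x = x"
proof -
  obtain x where x: "x \<in> K" and min: "\<And>y. y \<in> K \<Longrightarrow> orbit_sqnorm G x \<le> orbit_sqnorm G y"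
    using continuous_attains_inf[OF assms(5,7)
        continuous_on_subset[OF continuous_on_orbit_sqnorm[OF assms(1,2)]]]
    by blast
  have "V x = x" if V: "V \<in> G" for V
  proof (rule ccontr)
    assume moved: "V x \<noteq> x"
    have "V x \<in> K" using assms(8)[OF V] x by blast
    then have "midpoint x (V x) \<in> K"
      using \<open>convex K\<close> x by (metis midpoints_in_convex_hull convex_hull_eq)
    moreover have "orbit_sqnorm G (midpoint x (V x)) < orbit_sqnorm G x"
      using orbit_sqnorm_midpoint_less[OF assms(1,2,4), of x "V x"] moved
        orbit_sqnorm_apply_le[OF assms(1,3) V, of x] by auto
    ultimately show False using min by fastforce
  qed
  with x that show ?thesis by blast
qed

lemma reversible_group_inj:
  fixes G :: "('a::euclidean_space \<Rightarrow>\<^sub>L 'a) set"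
  assumes "reversible_group G S" "U \<in> G"
  shows "inj U"
proof -
  obtain V where "V o\<^sub>L U = id_blinfun"
    using assms unfolding reversible_group_def by blast
  then have "V (U x) = x" for x
    by (metis blinfun_apply_blinfun_compose id_blinfun.rep_eq id_apply)
  then show ?thesis by (metis injI)
qed

lemma reversible_group_image_rel_interior:
  fixes G :: "('a::euclidean_space \<Rightarrow>\<^sub>L 'a) set"
  assumes "reversible_group G S" "U \<in> G"
  shows "U ` rel_interior S = rel_interior S"
  using rel_interior_injective_linear_image[OF blinfun.bounded_linear_right
      reversible_group_inj[OF assms], of S] assms
  unfolding reversible_group_def by simp

lemma reversible_group_invariant_state_in_rel_interior:
  fixes G :: "('a::euclidean_space \<Rightarrow>\<^sub>L 'a) set"
  assumes "convex S" "S \<noteq> {}" "reversible_group G S"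
  obtains \<psi> where "invariant_state G S \<psi>" "\<psi> \<in> rel_interior S"
proof -
  have id: "id_blinfun \<in> G" and compose: "\<And>U V. U \<in> G \<Longrightarrow> V \<in> G \<Longrightarrow> U o\<^sub>L V \<in> G"
    and "compact G"
    using assms(3) unfolding reversible_group_def by auto
  obtain w where w: "w \<in> rel_interior S"
    using rel_interior_eq_empty[OF assms(1)] assms(2) by blast
  define K where "K = convex hull ((\<lambda>U. blinfun_apply U w) ` G)"
  have K_rel_interior: "K \<subseteq> rel_interior S"
    unfolding K_def using reversible_group_image_rel_interior[OF assms(3)] w
    by (intro hull_minimal convex_rel_interior[OF assms(1)]) blast
  have "compact K"
    unfolding K_def using \<open>compact G\<close>
    by (intro compact_convex_hull compact_continuous_image) (auto intro: continuous_intros)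
  moreover have "convex K" "K \<noteq> {}" unfolding K_def using id by auto
  moreover have "U ` K \<subseteq> K" if "U \<in> G" for U
  proof -
    have "U ` K = convex hull ((\<lambda>V. U (blinfun_apply V w)) ` G)"
      unfolding K_def by (simp add: convex_hull_linear_image bounded_linear.linear image_image
          blinfun.bounded_linear_right)
    also have "\<dots> \<subseteq> K"
      unfolding K_def using compose[OF that]
      by (intro hull_mono image_subsetI) (metis blinfun_apply_blinfun_compose image_eqI)
    finally show ?thesis .
  qed
  ultimately obtain \<psi> where "\<psi> \<in> K" "\<And>U. U \<in> G \<Longrightarrow> U \<psi> = \<psi>"
    using compact_semigroup_common_fixed_point[OF \<open>compact G\<close> _ compose
        reversible_group_inj[OF assms(3)], of K] id
    by blast
  then show ?thesis
    using that K_rel_interior rel_interior_subset unfolding invariant_state_def by blast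
qed

lemma rel_interior_imp_internal_state:
  fixes S :: "'a::euclidean_space set"
  assumes "convex S" "chi \<in> rel_interior S"
  shows "internal_state S chi"
  unfolding internal_state_def
proof
  fix \<omega> assume "\<omega> \<in> S"
  then obtain e where e: "e > 1" "(1 - e) *\<^sub>R \<omega> + e *\<^sub>R chi \<in> S"
    using convex_rel_interior_iff[OF assms(1)] assms(2) by blast
  define p where "p = 1 - 1 / e"
  have "0 < p" "p \<le> 1" using e(1) by (auto simp: p_def field_simps)
  moreover have "chi = p *\<^sub>R \<omega> + (1 - p) *\<^sub>R ((1 - e) *\<^sub>R \<omega> + e *\<^sub>R chi)"
    using e(1) by (simp add: p_def algebra_simps)
  ultimately show "\<exists>p \<omega>C. 0 < p \<and> p \<le> 1 \<and> \<omega>C \<in> S \<and> chi = p *\<^sub>R \<omega> + (1 - p) *\<^sub>R \<omega>C"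
    using e(2) by blast
qed

theorem mainTheorem11:
  fixes St1 :: "'v::euclidean_space set"
    and G :: "('v \<Rightarrow>\<^sub>L 'v) set"
    and chi :: 'v
  assumes "convex St1" and "compact St1"
    and "reversible_group G St1"
    and "invariant_state G St1 chi"
    and "\<forall>\<psi>. invariant_state G St1 \<psi> \<longrightarrow> \<psi> = chi"
  shows "internal_state St1 chi"
proof -
  have "St1 \<noteq> {}" using assms(4) unfolding invariant_state_def by blast
  then obtain \<psi> where "invariant_state G St1 \<psi>" "\<psi> \<in> rel_interior St1"
    using reversible_group_invariant_state_in_rel_interior[OF assms(1) _ assms(3)] by blast
  with assms(5) have "chi \<in> rel_interior St1" by blast
  then show ?thesis by (rule rel_interior_imp_internal_state[OF assms(1)])
qed

end
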